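(* Let $\pi$ be uniform on $\mathrm{PF}_n$ and let $L(\pi)$ be the number of lucky cars. Then for every real $x$, $$P\left(\frac{L(\pi)-n/2}{\sqrt{n/6}}\le x\right)\to\int_{-\infty}^x\frac{e^{-t^2/2}}{\sqrt{2\pi}}\,dt\qquad(n\to\infty).$$
   Context: A parking function of length $n$ is a sequence $(\pi_1,\dots,\pi_n)$ with $1\le\pi_i\le n$ such that $\#\{t:\pi_t\le i\}\ge i$ for all $1\le i\le n$; $\mathrm{PF}_n$ denotes the set of these. Parking process: there are spots $1,\dots,n$ in a line; cars $1,\dots,n$ arrive in order, car $i$ takes spot $\pi_i$ if free and otherwise the first free spot to its right (for $\pi\in\mathrm{PF}_n$ all cars park). Car $i$ is lucky if it parks in spot $\pi_i$; $L(\pi)$ is the number of lucky cars. *)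

theory Defs
  imports "HOL-Analysis.Analysis"
begin

definition PF :: "nat \<Rightarrow> nat list set" where
  "PF n = {p. length p = n \<and> (\<forall>i<n. 1 \<le> p ! i \<and> p ! i \<le> n) \<and>
              (\<forall>i\<in>{1..n}. card {t. t < n \<and> p ! t \<le> i} \<ge> i)}"

definition spot :: "nat set \<Rightarrow> nat \<Rightarrow> nat" where
  "spot occ s = (LEAST k. s \<le> k \<and> k \<notin> occ)"

fun lucky_aux :: "nat set \<Rightarrow> nat list \<Rightarrow> nat" where
  "lucky_aux occ [] = 0"
| "lucky_aux occ (s # ss) =
     (if spot occ s = s then 1 else 0) + lucky_aux (insert (spot occ s) occ) ss"

definition lucky :: "nat list \<Rightarrow> nat" where
  "lucky p = lucky_aux {} p"

end

theory Submission
  imports Defs "HOL-Probability.Probability" "HOL-Real_Asymp.Real_Asymp"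
begin

text \<open>Pollak's circle argument. Add a spot 0 to the n spots and let the cars park on the
  circle of n + 1 spots, a car passing from spot n to spot 0. Every preference sequence in
  {0..n}^n leaves exactly one spot empty, rotating all preferences rotates the outcome and keeps
  the lucky cars, and the parking functions are exactly the sequences leaving spot 0 empty. As a
  car arriving at k occupied spots is lucky for n + 1 - k of the n + 1 preferences, the number of
  lucky cars of a uniform parking function is distributed as a sum of independent Bernoulli
  variables with parameters (n + 1 - i) / (n + 1), i < n. Its mean is n/2 + O(1) and its
  variance n/6 + O(1), and the Bernoulli central limit theorem (via characteristic functions
  and Levy's continuity theorem) gives the normal limit.\<close>

section \<open>Parking on a circle\<close>

definition circ_spot :: "nat \<Rightarrow> nat set \<Rightarrow> nat \<Rightarrow> nat" where
  "circ_spot N occ s = (s + (LEAST j. (s + j) mod N \<notin> occ)) mod N"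

fun circ_park :: "nat \<Rightarrow> nat set \<Rightarrow> nat list \<Rightarrow> nat list" where
  "circ_park N occ [] = []"
| "circ_park N occ (s # ss) = circ_spot N occ s # circ_park N (insert (circ_spot N occ s) occ) ss"

fun circ_lucky :: "nat \<Rightarrow> nat set \<Rightarrow> nat list \<Rightarrow> nat" where
  "circ_lucky N occ [] = 0"
| "circ_lucky N occ (s # ss) =
     (if s \<in> occ then 0 else 1) + circ_lucky N (insert (circ_spot N occ s) occ) ss"

lemma circ_spot_Least:
  assumes "occ \<subseteq> {..<N}" "card occ < N" "s < N"
  defines "j \<equiv> LEAST j. (s + j) mod N \<notin> occ"
  shows "(s + j) mod N \<notin> occ" "j < N" "\<And>j'. j' < j \<Longrightarrow> (s + j') mod N \<in> occ"
proof -
  have "\<not> {..<N} \<subseteq> occ"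
    using assms(2) card_mono[of occ "{..<N}"] finite_subset[OF assms(1)] by auto
  then obtain k where k: "k < N" "k \<notin> occ" by blast
  have "(s + (k + N - s)) mod N = k"
    using k assms(3) by simp
  then have free: "(s + (k + N - s) mod N) mod N \<notin> occ"
    using k by (simp add: mod_add_right_eq)
  show "(s + j) mod N \<notin> occ"
    unfolding j_def by (rule LeastI[where P="\<lambda>j. (s + j) mod N \<notin> occ", OF free])
  have "j \<le> (k + N - s) mod N"
    unfolding j_def by (rule Least_le[where P="\<lambda>j. (s + j) mod N \<notin> occ", OF free])
  moreover have "(k + N - s) mod N < N"
    using k by simp
  ultimately show "j < N"
    by linarith
  show "\<And>j'. j' < j \<Longrightarrow> (s + j') mod N \<in> occ"
    unfolding j_def using not_less_Least by blast
qed

lemma circ_spot_free: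
  assumes "occ \<subseteq> {..<N}" "card occ < N" "s < N"
  shows "circ_spot N occ s < N" "circ_spot N occ s \<notin> occ"
    and "s \<notin> occ \<Longrightarrow> circ_spot N occ s = s"
proof -
  show "circ_spot N occ s < N" "circ_spot N occ s \<notin> occ"
    using circ_spot_Least[OF assms] assms(3) by (auto simp: circ_spot_def)
  assume "s \<notin> occ"
  then have "(LEAST j. (s + j) mod N \<notin> occ) = 0"
    using assms(3) by (intro Least_equality) auto
  then show "circ_spot N occ s = s"
    using assms(3) by (simp add: circ_spot_def)
qed

lemma circ_spot_insert:
  assumes "occ \<subseteq> {..<N}" "card occ < N" "s < N"
  shows "insert (circ_spot N occ s) occ \<subseteq> {..<N}" "card (insert (circ_spot N occ s) occ) = Suc (card occ)"
  using circ_spot_free[OF assms] finite_subset[OF assms(1)] assms(1) by auto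

lemma circ_park_step:
  assumes "occ \<subseteq> {..<N}" "card occ + length (s # ss) \<le> N" "set (s # ss) \<subseteq> {..<N}"
  shows "circ_spot N occ s < N" "circ_spot N occ s \<notin> occ"
    and "insert (circ_spot N occ s) occ \<subseteq> {..<N}"
    and "card (insert (circ_spot N occ s) occ) + length ss \<le> N" "set ss \<subseteq> {..<N}"
proof -
  have "card occ < N" "s < N"
    using assms by auto
  then show "circ_spot N occ s < N" "circ_spot N occ s \<notin> occ"
    and "insert (circ_spot N occ s) occ \<subseteq> {..<N}"
    and "card (insert (circ_spot N occ s) occ) + length ss \<le> N" "set ss \<subseteq> {..<N}"
    using circ_spot_free[OF assms(1)] circ_spot_insert[OF assms(1)] assms(2,3) by auto
qed

lemma circ_park_distinct:
  assumes "occ \<subseteq> {..<N}" "card occ + length ss \<le> N" "set ss \<subseteq> {..<N}"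
  shows "set (circ_park N occ ss) \<subseteq> {..<N} \<and> distinct (circ_park N occ ss) \<and>
    set (circ_park N occ ss) \<inter> occ = {} \<and> length (circ_park N occ ss) = length ss"
  using assms
proof (induction ss arbitrary: occ)
  case (Cons s ss)
  note step = circ_park_step[OF Cons.prems]
  show ?case using Cons.IH[OF step(3-5)] step(1,2) by auto
qed simp

lemma sum_lists_length_Suc:
  "(\<Sum>xs | set xs \<subseteq> A \<and> length xs = Suc m. g xs) =
   (\<Sum>a\<in>A. \<Sum>xs | set xs \<subseteq> A \<and> length xs = m. g (a # xs))"
proof -
  let ?S = "{xs. set xs \<subseteq> A \<and> length xs = m}"
  have inj: "inj_on (\<lambda>(xs, a). a # xs) (?S \<times> A)"
    by (auto simp: inj_on_def)
  have "(\<Sum>xs | set xs \<subseteq> A \<and> length xs = Suc m. g xs) = (\<Sum>(xs, a)\<in>?S \<times> A. g (a # xs))"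
    unfolding lists_length_Suc_eq sum.reindex[OF inj] by (simp add: comp_def case_prod_beta)
  also have "\<dots> = (\<Sum>xs\<in>?S. \<Sum>a\<in>A. g (a # xs))"
    by (rule sum.cartesian_product[symmetric])
  finally show ?thesis
    by (simp add: sum.swap[of _ ?S])
qed

text \<open>A car arriving when k of the N spots are taken is lucky for exactly N - k of its
  N possible preferences, whatever the configuration.\<close>
lemma sum_power_circ_lucky:
  fixes z :: "'a::comm_semiring_1"
  assumes "occ \<subseteq> {..<N}" "card occ + m \<le> N"
  shows "(\<Sum>xs | set xs \<subseteq> {..<N} \<and> length xs = m. z ^ circ_lucky N occ xs) =
         (\<Prod>i<m. of_nat (N - card occ - i) * z + of_nat (card occ + i))"
  using assms
proof (induction m arbitrary: occ)
  case 0
  have "{xs. set xs \<subseteq> {..<N} \<and> length xs = 0} = {[]}" by auto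
  then show ?case by simp
next
  case (Suc m)
  let ?S = "{xs. set xs \<subseteq> {..<N} \<and> length xs = m}"
  let ?P = "\<Prod>i<m. of_nat (N - Suc (card occ) - i) * z + of_nat (Suc (card occ) + i) :: 'a"
  have first_car: "(\<Sum>xs\<in>?S. z ^ circ_lucky N occ (a # xs)) = (if a \<in> occ then 1 else z) * ?P"
    if "a < N" for a
  proof -
    have "card occ < N"
      using Suc.prems(2) by simp
    note occ' = circ_spot_insert[OF Suc.prems(1) this that]
    have "(\<Sum>xs\<in>?S. z ^ circ_lucky N occ (a # xs)) =
        (if a \<in> occ then 1 else z) * (\<Sum>xs\<in>?S. z ^ circ_lucky N (insert (circ_spot N occ a) occ) xs)"
      by (simp add: power_add sum_distrib_left)
    then show ?thesis
      using Suc.IH[OF occ'(1)] occ'(2) Suc.prems(2) by simp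
  qed
  have "(\<Sum>xs | set xs \<subseteq> {..<N} \<and> length xs = Suc m. z ^ circ_lucky N occ xs)
      = (\<Sum>a<N. (if a \<in> occ then 1 else z) * ?P)"
    unfolding sum_lists_length_Suc by (intro sum.cong refl first_car) simp
  also have "\<dots> = (\<Sum>a<N. if a \<in> occ then 1 else z) * ?P"
    by (rule sum_distrib_right[symmetric])
  also have "(\<Sum>a<N. if a \<in> occ then 1 else z) = of_nat (card occ) + of_nat (N - card occ) * z"
    using Suc.prems(1) finite_subset[OF Suc.prems(1)]
    by (simp add: sum.If_cases Int_absorb1 Diff_eq[symmetric] card_Diff_subset)
  also have "(of_nat (card occ) + of_nat (N - card occ) * z) * ?P =
      (\<Prod>i<Suc m. of_nat (N - card occ - i) * z + of_nat (card occ + i))"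
    unfolding prod.lessThan_Suc_shift by (simp add: algebra_simps)
  finally show ?case .
qed

definition rot :: "nat \<Rightarrow> nat \<Rightarrow> nat \<Rightarrow> nat" where
  "rot N c v = (v + c) mod N"

lemma rot_rot: "rot N c (rot N d v) = rot N (c + d) v"
  by (simp add: rot_def mod_add_left_eq add.assoc add.commute[of c])

lemma rot_inverse:
  assumes "v < N" "c \<le> N"
  shows "rot N c (rot N (N - c) v) = v" "rot N (N - c) (rot N c v) = v"
  using assms by (simp_all add: rot_rot) (simp_all add: rot_def)

lemma inj_on_rot: "c \<le> N \<Longrightarrow> inj_on (rot N c) {..<N}"
  by (rule inj_on_inverseI[of _ "rot N (N - c)"]) (simp add: rot_inverse)

lemma rot_mem_rot_image:
  "c \<le> N \<Longrightarrow> v < N \<Longrightarrow> A \<subseteq> {..<N} \<Longrightarrow> rot N c v \<in> rot N c ` A \<longleftrightarrow> v \<in> A"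
  by (rule inj_on_image_mem_iff[OF inj_on_rot]) auto

lemma circ_spot_rot:
  assumes "c \<le> N" "occ \<subseteq> {..<N}"
  shows "circ_spot N (rot N c ` occ) (rot N c s) = rot N c (circ_spot N occ s)"
proof -
  have shift: "(rot N c s + j) mod N = rot N c ((s + j) mod N)" for j
    by (simp add: rot_def mod_add_left_eq mod_add_right_eq algebra_simps)
  have "(rot N c s + j) mod N \<in> rot N c ` occ \<longleftrightarrow> (s + j) mod N \<in> occ" for j
    unfolding shift using assms rot_mem_rot_image[of c N "(s + j) mod N" occ]
    by (cases "N = 0") auto
  then show ?thesis
    unfolding circ_spot_def shift[symmetric] by simp
qed

lemma circ_park_rot:
  assumes "c \<le> N" "0 < N" "occ \<subseteq> {..<N}" "set ss \<subseteq> {..<N}"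
  shows "circ_park N (rot N c ` occ) (map (rot N c) ss) = map (rot N c) (circ_park N occ ss) \<and>
         circ_lucky N (rot N c ` occ) (map (rot N c) ss) = circ_lucky N occ ss"
  using assms(3,4)
proof (induction ss arbitrary: occ)
  case (Cons s ss)
  have "circ_spot N occ s < N"
    using assms(2) by (simp add: circ_spot_def)
  then have "insert (circ_spot N occ s) occ \<subseteq> {..<N}"
    using Cons.prems by simp
  moreover have "rot N c s \<in> rot N c ` occ \<longleftrightarrow> s \<in> occ"
    using Cons.prems assms(1) by (intro rot_mem_rot_image) auto
  ultimately show ?case
    using Cons.IH[of "insert (circ_spot N occ s) occ"] Cons.prems circ_spot_rot[OF assms(1) Cons.prems(1)]
    by simp
qed simp

lemma spot_eq_circ_spot:
  assumes "occ \<subseteq> {..<N}" "card occ < N" "s < N" "0 \<notin> occ" "circ_spot N occ s \<noteq> 0"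
  shows "spot occ s = circ_spot N occ s"
proof -
  define j where "j = (LEAST j. (s + j) mod N \<notin> occ)"
  note least = circ_spot_Least[OF assms(1-3), folded j_def]
  have "j \<le> N - s"
    unfolding j_def using assms(3,4)
    by (intro Least_le[where P="\<lambda>j. (s + j) mod N \<notin> occ"]) simp
  moreover have "j \<noteq> N - s"
    using assms(3,5) by (auto simp: circ_spot_def j_def[symmetric])
  ultimately have no_wrap: "s + j < N"
    using assms(3) by linarith
  have "spot occ s = s + j"
    unfolding spot_def
  proof (rule Least_equality)
    show "s \<le> s + j \<and> s + j \<notin> occ"
      using least(1) no_wrap by simp
    fix k assume k: "s \<le> k \<and> k \<notin> occ"
    show "s + j \<le> k"
    proof (rule ccontr)
      assume "\<not> s + j \<le> k"
      then have "(s + (k - s)) mod N \<in> occ"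
        using least(3)[of "k - s"] k by linarith
      then show False
        using k no_wrap \<open>\<not> s + j \<le> k\<close> by simp
    qed
  qed
  then show ?thesis
    using no_wrap by (simp add: circ_spot_def j_def[symmetric])
qed

text \<open>While spot 0 stays empty nobody wraps around, so circular and linear parking agree.\<close>
lemma lucky_aux_eq_circ_lucky:
  assumes "occ \<subseteq> {..<N}" "card occ + length ss \<le> N" "set ss \<subseteq> {..<N}"
    and "0 \<notin> occ \<union> set (circ_park N occ ss)"
  shows "lucky_aux occ ss = circ_lucky N occ ss"
  using assms
proof (induction ss arbitrary: occ)
  case (Cons s ss)
  note step = circ_park_step[OF Cons.prems(1-3)]
  have "spot occ s = circ_spot N occ s"
    using Cons.prems by (intro spot_eq_circ_spot) auto
  moreover have "circ_spot N occ s = s \<longleftrightarrow> s \<notin> occ"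
    using circ_spot_free[of occ N s] Cons.prems step(2) by auto
  ultimately show ?case
    using Cons.IH[OF step(3-5)] Cons.prems(4) by simp
qed simp

lemma circ_park_scan:
  assumes "occ \<subseteq> {..<N}" "card occ + length ss \<le> N" "set ss \<subseteq> {..<N}" "t < length ss"
  shows "\<exists>j. circ_park N occ ss ! t = (ss ! t + j) mod N \<and>
             (\<forall>j'\<le>j. (ss ! t + j') mod N \<in> occ \<union> set (circ_park N occ ss))"
  using assms
proof (induction ss arbitrary: occ t)
  case (Cons s ss)
  note step = circ_park_step[OF Cons.prems(1-3)]
  show ?case
  proof (cases t)
    case 0
    define j where "j = (LEAST j. (s + j) mod N \<notin> occ)"
    have "card occ < N" "s < N"
      using Cons.prems by auto
    note least = circ_spot_Least[OF Cons.prems(1) this, folded j_def]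
    have "(s + j') mod N \<in> occ \<union> set (circ_park N occ (s # ss))" if "j' \<le> j" for j'
      using that least(3)[of j'] by (cases "j' = j") (auto simp: circ_spot_def j_def)
    then show ?thesis
      using 0 by (intro exI[of _ j]) (simp add: circ_spot_def j_def)
  next
    case (Suc t')
    then obtain j where "circ_park N (insert (circ_spot N occ s) occ) ss ! t' = (ss ! t' + j) mod N"
      "\<forall>j'\<le>j. (ss ! t' + j') mod N \<in> insert (circ_spot N occ s) occ \<union>
                  set (circ_park N (insert (circ_spot N occ s) occ) ss)"
      using Cons.IH[OF step(3-5)] Cons.prems(4) by auto
    then show ?thesis
      using Suc by (intro exI[of _ j]) auto
  qed
qed simp

lemma circ_park_pref_mem:
  assumes "occ \<subseteq> {..<N}" "card occ + length ss \<le> N" "set ss \<subseteq> {..<N}" "t < length ss"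
  shows "ss ! t \<in> occ \<union> set (circ_park N occ ss)"
proof -
  have "ss ! t < N"
    using assms(3,4) nth_mem by blast
  then show ?thesis
    using circ_park_scan[OF assms] by fastforce
qed

text \<open>Here e = N stands for spot 0 reached after wrapping round.\<close>
lemma circ_park_before_free:
  assumes "occ \<subseteq> {..<N}" "card occ + length ss \<le> N" "set ss \<subseteq> {..<N}" "t < length ss"
    and "ss ! t \<le> e" "e \<le> N" "e mod N \<notin> occ \<union> set (circ_park N occ ss)"
  shows "ss ! t \<le> circ_park N occ ss ! t" "circ_park N occ ss ! t < e"
proof -
  obtain j where j: "circ_park N occ ss ! t = (ss ! t + j) mod N"
    "\<forall>j'\<le>j. (ss ! t + j') mod N \<in> occ \<union> set (circ_park N occ ss)"
    using circ_park_scan[OF assms(1-4)] by blast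
  have "ss ! t + j < e"
  proof (rule ccontr)
    assume "\<not> ss ! t + j < e"
    then have "(ss ! t + (e - ss ! t)) mod N \<in> occ \<union> set (circ_park N occ ss)"
      using j(2) by auto
    then show False
      using assms(5,7) by simp
  qed
  then show "ss ! t \<le> circ_park N occ ss ! t" "circ_park N occ ss ! t < e"
    using j(1) assms(6) by simp_all
qed

lemma card_indices_distinct:
  assumes "distinct xs"
  shows "card {t. t < length xs \<and> P (xs ! t)} = card {v \<in> set xs. P v}"
proof -
  have "inj_on (nth xs) {t. t < length xs \<and> P (xs ! t)}"
    using assms by (auto simp: inj_on_def nth_eq_iff_index_eq)
  moreover have "nth xs ` {t. t < length xs \<and> P (xs ! t)} = {v \<in> set xs. P v}"
    by (auto simp: in_set_conv_nth)
  ultimately show ?thesis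
    using card_image by fastforce
qed

lemma circ_park_full:
  assumes "length p = n" "set p \<subseteq> {..<Suc n}"
  shows "set (circ_park (Suc n) {} p) \<subseteq> {..<Suc n}" "distinct (circ_park (Suc n) {} p)"
    "length (circ_park (Suc n) {} p) = n" "card (set (circ_park (Suc n) {} p)) = n"
  using circ_park_distinct[of "{}" "Suc n" p] assms distinct_card[of "circ_park (Suc n) {} p"]
  by auto

lemma PF_imp_circ_park_avoids_0:
  assumes "p \<in> PF n"
  shows "0 \<notin> set (circ_park (Suc n) {} p)"
proof
  let ?pos = "circ_park (Suc n) {} p"
  assume "0 \<in> set ?pos"
  have len: "length p = n" and pref: "\<And>t. t < n \<Longrightarrow> 1 \<le> p ! t \<and> p ! t \<le> n"
    and count: "\<And>i. i \<in> {1..n} \<Longrightarrow> i \<le> card {t. t < n \<and> p ! t \<le> i}"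
    using assms by (auto simp: PF_def)
  have set_p: "set p \<subseteq> {..<Suc n}"
    using pref len by (auto simp: in_set_conv_nth less_Suc_eq_le)
  note full = circ_park_full[OF len set_p]
  have "\<not> {..<Suc n} \<subseteq> set ?pos"
    using card_mono[of "set ?pos" "{..<Suc n}"] full(4) by auto
  then obtain e where e: "e < Suc n" "e \<notin> set ?pos"
    by blast
  with \<open>0 \<in> set ?pos\<close> have e_range: "e \<in> {1..n}"
    by (cases e) auto
  have early: "{t. t < n \<and> p ! t \<le> e} \<subseteq> {t. t < length ?pos \<and> ?pos ! t \<in> {1..<e}}"
  proof safe
    fix t assume "t < n" "p ! t \<le> e"
    then have "p ! t \<le> ?pos ! t" "?pos ! t < e"
      using circ_park_before_free[of "{}" "Suc n" p t e] len set_p e by auto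
    then show "t < length ?pos" "?pos ! t \<in> {1..<e}"
      using pref[OF \<open>t < n\<close>] full(3) \<open>t < n\<close> by auto
  qed
  then have "card {t. t < n \<and> p ! t \<le> e} \<le> card {t. t < length ?pos \<and> ?pos ! t \<in> {1..<e}}"
    by (intro card_mono) simp_all
  also have "\<dots> = card {v \<in> set ?pos. v \<in> {1..<e}}"
    by (rule card_indices_distinct[OF full(2)])
  also have "\<dots> \<le> card {1..<e}"
    by (intro card_mono) auto
  finally show False
    using count[OF e_range] e_range by simp linarith
qed

lemma circ_park_avoids_0_imp_PF:
  assumes len: "length p = n" and set_p: "set p \<subseteq> {..<Suc n}"
    and avoid: "0 \<notin> set (circ_park (Suc n) {} p)"
  shows "p \<in> PF n"
proof -
  let ?pos = "circ_park (Suc n) {} p"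
  note full = circ_park_full[OF len set_p]
  have "set ?pos \<subseteq> {1..n}"
  proof
    fix v assume "v \<in> set ?pos"
    moreover from this have "v \<noteq> 0"
      using avoid by metis
    ultimately show "v \<in> {1..n}"
      using full(1) by fastforce
  qed
  then have filled: "set ?pos = {1..n}"
    using full(4) by (intro card_subset_eq) auto
  have pref: "1 \<le> p ! t \<and> p ! t \<le> ?pos ! t" if "t < n" for t
  proof -
    have "p ! t \<in> set ?pos" "p ! t \<le> ?pos ! t"
      using circ_park_pref_mem[of "{}" "Suc n" p t] that len set_p avoid
        circ_park_before_free[of "{}" "Suc n" p t "Suc n"] nth_mem[of t p]
      by (auto simp del: nth_mem)
    then show ?thesis
      using filled by auto
  qed
  have "i \<le> card {t. t < n \<and> p ! t \<le> i}" if "i \<in> {1..n}" for i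
  proof -
    have "{v \<in> set ?pos. v \<le> i} = {1..i}"
      using filled that by auto
    then have "i = card {v \<in> set ?pos. v \<le> i}"
      by simp
    also have "\<dots> = card {t. t < length ?pos \<and> ?pos ! t \<le> i}"
      by (rule card_indices_distinct[OF full(2), symmetric])
    also have "\<dots> = card {t. t < n \<and> ?pos ! t \<le> i}"
      using full(3) by simp
    also have "\<dots> \<le> card {t. t < n \<and> p ! t \<le> i}"
      using pref by (intro card_mono) (auto intro: order_trans)
    finally show ?thesis .
  qed
  moreover have "p ! t \<le> n" if "t < n" for t
    using pref[OF that] filled nth_mem[of t ?pos] full(3) that by (auto simp del: nth_mem)
  ultimately show ?thesis
    using pref len by (auto simp: PF_def)
qed

lemma PF_iff_circ_park:
  "p \<in> PF n \<longleftrightarrow> length p = n \<and> set p \<subseteq> {..<Suc n} \<and> 0 \<notin> set (circ_park (Suc n) {} p)"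
proof
  assume p: "p \<in> PF n"
  then have "length p = n" "set p \<subseteq> {..<Suc n}"
    by (auto simp: PF_def in_set_conv_nth less_Suc_eq_le)
  then show "length p = n \<and> set p \<subseteq> {..<Suc n} \<and> 0 \<notin> set (circ_park (Suc n) {} p)"
    using PF_imp_circ_park_avoids_0[OF p] by blast
qed (use circ_park_avoids_0_imp_PF in blast)

definition leaves_free :: "nat \<Rightarrow> nat \<Rightarrow> nat list set" where
  "leaves_free n c = {xs. set xs \<subseteq> {..<Suc n} \<and> length xs = n \<and> c \<notin> set (circ_park (Suc n) {} xs)}"

lemma PF_eq_leaves_free: "PF n = leaves_free n 0"
  by (auto simp: leaves_free_def PF_iff_circ_park)

lemma sum_lists_by_free_spot:
  fixes g :: "nat list \<Rightarrow> 'a::comm_monoid_add"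
  shows "(\<Sum>xs | set xs \<subseteq> {..<Suc n} \<and> length xs = n. g xs) = (\<Sum>c<Suc n. \<Sum>xs\<in>leaves_free n c. g xs)"
proof -
  define S where "S = {xs. set xs \<subseteq> {..<Suc n} \<and> length xs = n}"
  define F where "F xs = set (circ_park (Suc n) {} xs)" for xs
  have finite_S: "finite S"
    unfolding S_def by (simp add: finite_lists_length_eq)
  have leaves_free_eq: "leaves_free n c = {xs \<in> S. c \<notin> F xs}" for c
    by (auto simp: leaves_free_def S_def F_def)
  have one_free: "\<exists>c. {c \<in> {..<Suc n}. c \<notin> F xs} = {c}" if "xs \<in> S" for xs
  proof -
    have "{c \<in> {..<Suc n}. c \<notin> F xs} = {..<Suc n} - F xs"
      by auto
    then have "card {c \<in> {..<Suc n}. c \<notin> F xs} = 1"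
      using circ_park_full[of xs n] that by (simp add: S_def F_def card_Diff_subset)
    then show ?thesis
      by (rule card_1_singletonE) blast
  qed
  have "(\<Sum>c<Suc n. \<Sum>xs\<in>leaves_free n c. g xs) = (\<Sum>xs\<in>S. \<Sum>c<Suc n. if c \<notin> F xs then g xs else 0)"
    unfolding leaves_free_eq sum.inter_filter[OF finite_S] by (rule sum.swap)
  also have "\<dots> = (\<Sum>xs\<in>S. \<Sum>c\<in>{c \<in> {..<Suc n}. c \<notin> F xs}. g xs)"
    by (simp only: sum.inter_filter[OF finite_lessThan])
  also have "\<dots> = (\<Sum>xs\<in>S. g xs)"
    by (rule sum.cong[OF refl]) (use one_free in force)
  finally show ?thesis
    by (simp add: S_def)
qed

lemma bij_betw_rot_leaves_free:
  assumes "c < Suc n"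
  shows "bij_betw (map (rot (Suc n) c)) (leaves_free n 0) (leaves_free n c)"
proof -
  have rot_leaves_free: "map (rot (Suc n) d) xs \<in> leaves_free n (rot (Suc n) d v)"
    if "xs \<in> leaves_free n v" "d \<le> Suc n" "v < Suc n" for d xs v
  proof -
    have "set (circ_park (Suc n) {} (map (rot (Suc n) d) xs)) = rot (Suc n) d ` set (circ_park (Suc n) {} xs)"
      using circ_park_rot[of d "Suc n" "{}" xs] that by (simp add: leaves_free_def)
    then show ?thesis
      using that circ_park_full[of xs n] rot_mem_rot_image[of d "Suc n" v]
      by (auto simp: leaves_free_def rot_def)
  qed
  have inverse: "map (rot (Suc n) d) (map (rot (Suc n) (Suc n - d)) xs) = xs"
    "map (rot (Suc n) (Suc n - d)) (map (rot (Suc n) d) xs) = xs"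
    if "xs \<in> leaves_free n v" "d \<le> Suc n" for xs d v
    using that by (auto simp: leaves_free_def subset_iff rot_inverse intro!: map_idI)
  have "rot (Suc n) c 0 = c" "rot (Suc n) (Suc n - c) c = 0"
    using assms by (simp_all add: rot_def)
  then show ?thesis
    using assms rot_leaves_free[of _ 0 c] rot_leaves_free[of _ c "Suc n - c"] inverse
    by (intro bij_betw_byWitness[where f'="map (rot (Suc n) (Suc n - c))"]) auto
qed

lemma lucky_eq_circ_lucky: "p \<in> PF n \<Longrightarrow> lucky p = circ_lucky (Suc n) {} p"
  unfolding lucky_def PF_iff_circ_park by (intro lucky_aux_eq_circ_lucky) auto

theorem sum_power_lucky_PF:
  fixes z :: "'a::comm_semiring_1"
  shows "of_nat (Suc n) * (\<Sum>p\<in>PF n. z ^ lucky p) = (\<Prod>i<n. of_nat (Suc n - i) * z + of_nat i)"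
proof -
  let ?g = "\<lambda>xs. z ^ circ_lucky (Suc n) {} xs"
  have rotate: "(\<Sum>xs\<in>leaves_free n c. ?g xs) = (\<Sum>xs\<in>leaves_free n 0. ?g xs)" if "c < Suc n" for c
  proof -
    have "?g (map (rot (Suc n) c) xs) = ?g xs" if "xs \<in> leaves_free n 0" for xs
      using circ_park_rot[of c "Suc n" "{}" xs] \<open>c < Suc n\<close> that by (simp add: leaves_free_def)
    then show ?thesis
      using sum.reindex_bij_betw[OF bij_betw_rot_leaves_free[OF that], of ?g] by simp
  qed
  have "(\<Prod>i<n. of_nat (Suc n - i) * z + of_nat i) = (\<Sum>xs | set xs \<subseteq> {..<Suc n} \<and> length xs = n. ?g xs)"
    using sum_power_circ_lucky[of "{}" "Suc n" n z] by simp
  also have "\<dots> = (\<Sum>c<Suc n. \<Sum>xs\<in>leaves_free n c. ?g xs)"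
    by (rule sum_lists_by_free_spot)
  also have "\<dots> = (\<Sum>c<Suc n. \<Sum>xs\<in>leaves_free n 0. ?g xs)"
    by (rule sum.cong[OF refl]) (rule rotate, simp)
  also have "\<dots> = of_nat (Suc n) * (\<Sum>p\<in>PF n. ?g p)"
    by (simp only: sum_constant card_lessThan PF_eq_leaves_free)
  also have "(\<Sum>p\<in>PF n. ?g p) = (\<Sum>p\<in>PF n. z ^ lucky p)"
    by (rule sum.cong[OF refl]) (simp only: lucky_eq_circ_lucky)
  finally show ?thesis ..
qed

section \<open>A central limit theorem for Bernoulli arrays\<close>

definition centered_bernoulli_char :: "real \<Rightarrow> real \<Rightarrow> complex" where
  "centered_bernoulli_char q x = of_real q * iexp (x * (1 - q)) + of_real (1 - q) * iexp (- x * q)"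

lemma bernoulli_char_eq_centered:
  "of_real q * iexp x + of_real (1 - q) = iexp (x * q) * centered_bernoulli_char q x"
proof -
  have "iexp (x * q) * iexp (x * (1 - q)) = iexp x" "iexp (x * q) * iexp (- x * q) = 1"
    by (simp_all add: exp_add[symmetric] algebra_simps)
  then show ?thesis
    unfolding centered_bernoulli_char_def by (simp add: algebra_simps)
qed

lemma norm_centered_bernoulli_char_le:
  assumes "0 \<le> q" "q \<le> 1"
  shows "norm (centered_bernoulli_char q x) \<le> 1"
proof -
  have "norm (centered_bernoulli_char q x) \<le>
      norm (of_real q * iexp (x * (1 - q))) + norm (of_real (1 - q) * iexp (- x * q))"
    unfolding centered_bernoulli_char_def by (rule norm_triangle_ineq)
  also have "\<dots> = q + (1 - q)"
    using assms by (simp add: norm_mult del: of_real_diff)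
  finally show ?thesis
    by simp
qed

lemma iexp_approx_quadratic: "norm (iexp x - (1 + \<i> * x - x\<^sup>2 / 2)) \<le> \<bar>x\<bar> ^ 3 / 6"
proof -
  have "(\<Sum>k\<le>2. (\<i> * x) ^ k / fact k) = 1 + \<i> * x - x\<^sup>2 / 2"
    by (simp add: numeral_2_eq_2 power2_eq_square field_simps)
  then show ?thesis
    using iexp_approx1[of x 2] by (simp add: numeral_3_eq_3)
qed

lemma centered_bernoulli_char_approx:
  assumes "0 \<le> q" "q \<le> 1"
  shows "norm (centered_bernoulli_char q x - (1 - q * (1 - q) * x\<^sup>2 / 2)) \<le> q * (1 - q) * \<bar>x\<bar> ^ 3 / 6"
proof -
  define a b where "a = x * (1 - q)" and "b = - x * q"
  define Ta Tb where "Ta = 1 + \<i> * a - a\<^sup>2 / 2" and "Tb = 1 + \<i> * b - b\<^sup>2 / 2"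
  have "of_real q * Ta + of_real (1 - q) * Tb = 1 - q * (1 - q) * x\<^sup>2 / 2"
    unfolding Ta_def Tb_def a_def b_def by (simp add: complex_eq_iff power2_eq_square field_simps)
  then have "centered_bernoulli_char q x - (1 - q * (1 - q) * x\<^sup>2 / 2) =
      of_real q * (iexp a - Ta) + of_real (1 - q) * (iexp b - Tb)"
    unfolding centered_bernoulli_char_def a_def b_def by (simp add: algebra_simps)
  also have "norm \<dots> \<le> q * (\<bar>a\<bar> ^ 3 / 6) + (1 - q) * (\<bar>b\<bar> ^ 3 / 6)"
  proof (rule order_trans[OF norm_triangle_ineq add_mono])
    show "norm (of_real q * (iexp a - Ta)) \<le> q * (\<bar>a\<bar> ^ 3 / 6)"
      using assms mult_left_mono[OF iexp_approx_quadratic[of a, folded Ta_def], of q]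
      by (simp add: norm_mult)
    show "norm (of_real (1 - q) * (iexp b - Tb)) \<le> (1 - q) * (\<bar>b\<bar> ^ 3 / 6)"
      using assms mult_left_mono[OF iexp_approx_quadratic[of b, folded Tb_def], of "1 - q"]
      by (simp add: norm_mult del: of_real_diff)
  qed
  also have "\<dots> = q * (1 - q) * \<bar>x\<bar> ^ 3 / 6 * ((1 - q)\<^sup>2 + q\<^sup>2)"
  proof -
    have "\<bar>a\<bar> = \<bar>x\<bar> * (1 - q)" "\<bar>b\<bar> = \<bar>x\<bar> * q"
      using assms by (simp_all add: a_def b_def abs_mult)
    then show ?thesis
      by (simp only:) (simp add: power2_eq_square power3_eq_cube field_simps)
  qed
  also have "\<dots> \<le> q * (1 - q) * \<bar>x\<bar> ^ 3 / 6"
  proof -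
    have "(1 - q)\<^sup>2 + q\<^sup>2 \<le> 1"
      using assms by (simp add: power2_eq_square algebra_simps mult_left_le)
    then show ?thesis
      using assms by (intro mult_left_le) auto
  qed
  finally show ?thesis .
qed

lemma one_minus_le_exp_minus_plus_square:
  fixes a :: real
  assumes "0 \<le> a"
  shows "\<bar>(1 - a) - exp (- a)\<bar> \<le> a\<^sup>2"
proof -
  have "1 - a \<le> exp (- a)"
    using exp_ge_add_one_self[of "- a"] by simp
  moreover have "exp (- a) \<le> 1 / (1 + a)"
    using exp_ge_add_one_self[of a] assms by (simp add: exp_minus field_simps)
  moreover have "1 / (1 + a) \<le> 1 - a + a\<^sup>2"
    using assms by (simp add: field_simps power2_eq_square)
  ultimately show ?thesis
    by simp
qed

lemma prod_one_minus_approx_exp: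
  fixes a :: "'i \<Rightarrow> real"
  assumes "\<And>i. i \<in> I \<Longrightarrow> 0 \<le> a i \<and> a i \<le> 1"
  shows "\<bar>(\<Prod>i\<in>I. 1 - a i) - exp (- (\<Sum>i\<in>I. a i))\<bar> \<le> (\<Sum>i\<in>I. (a i)\<^sup>2)"
proof (cases "finite I")
  case True
  have "\<bar>(\<Prod>i\<in>I. 1 - a i) - (\<Prod>i\<in>I. exp (- a i))\<bar> \<le> (\<Sum>i\<in>I. \<bar>(1 - a i) - exp (- a i)\<bar>)"
    using assms by (intro norm_prod_diff[where 'a=real, unfolded real_norm_def]) auto
  also have "\<dots> \<le> (\<Sum>i\<in>I. (a i)\<^sup>2)"
    using assms by (intro sum_mono one_minus_le_exp_minus_plus_square) auto
  finally show ?thesis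
    using True by (simp add: exp_sum[symmetric] sum_negf)
qed simp

lemma mult_one_minus_le_quarter: "q * (1 - q) \<le> (1 / 4 :: real)"
  using zero_le_power2[of "q - 1 / 2"] by (simp add: power2_eq_square algebra_simps)

lemma prod_centered_bernoulli_char_approx:
  assumes "\<And>i. i \<in> I \<Longrightarrow> 0 \<le> q i \<and> q i \<le> 1" "\<bar>x\<bar> \<le> 1"
  shows "norm ((\<Prod>i\<in>I. centered_bernoulli_char (q i) x) - (\<Prod>i\<in>I. of_real (1 - q i * (1 - q i) * x\<^sup>2 / 2)))
    \<le> \<bar>x\<bar> ^ 3 / 6 * (\<Sum>i\<in>I. q i * (1 - q i))"
proof -
  have "norm (of_real (1 - q i * (1 - q i) * x\<^sup>2 / 2) :: complex) \<le> 1" if "i \<in> I" for i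
  proof -
    have "x\<^sup>2 \<le> 1"
      using assms(2) abs_square_le_1 by blast
    then have "q i * (1 - q i) * x\<^sup>2 \<le> 1 / 4"
      using mult_mono[OF mult_one_minus_le_quarter[of "q i"] \<open>x\<^sup>2 \<le> 1\<close>] by simp
    moreover have "0 \<le> q i * (1 - q i) * x\<^sup>2"
      using assms(1)[OF that] by simp
    ultimately show ?thesis
      by (simp del: of_real_diff)
  qed
  then have "norm ((\<Prod>i\<in>I. centered_bernoulli_char (q i) x) - (\<Prod>i\<in>I. of_real (1 - q i * (1 - q i) * x\<^sup>2 / 2)))
      \<le> (\<Sum>i\<in>I. norm (centered_bernoulli_char (q i) x - of_real (1 - q i * (1 - q i) * x\<^sup>2 / 2)))"
    using assms(1) by (intro norm_prod_diff norm_centered_bernoulli_char_le) auto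
  also have "\<dots> \<le> (\<Sum>i\<in>I. q i * (1 - q i) * \<bar>x\<bar> ^ 3 / 6)"
    using assms(1) by (intro sum_mono centered_bernoulli_char_approx) auto
  finally show ?thesis
    by (simp add: sum_distrib_left sum_divide_distrib mult.commute)
qed

lemma eventually_abs_le_1: "f \<longlonglongrightarrow> (0::real) \<Longrightarrow> eventually (\<lambda>n. \<bar>f n\<bar> \<le> 1) sequentially"
  using order_tendstoD(2)[OF tendsto_rabs, of f 0 sequentially 1] by (auto elim: eventually_mono)

context
  fixes q :: "nat \<Rightarrow> nat \<Rightarrow> real" and \<theta> :: "nat \<Rightarrow> real" and v :: real
  assumes q: "\<And>n i. i < n \<Longrightarrow> 0 \<le> q n i \<and> q n i \<le> 1"
    and \<theta>: "\<theta> \<longlonglongrightarrow> 0"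
    and variance: "(\<lambda>n. (\<theta> n)\<^sup>2 * (\<Sum>i<n. q n i * (1 - q n i))) \<longlonglongrightarrow> v"
begin

lemma prod_centered_bernoulli_char_array_approx:
  "(\<lambda>n. (\<Prod>i<n. centered_bernoulli_char (q n i) (\<theta> n)) -
        of_real (\<Prod>i<n. 1 - q n i * (1 - q n i) * (\<theta> n)\<^sup>2 / 2)) \<longlonglongrightarrow> 0"
proof (rule Lim_null_comparison)
  have "(\<lambda>n. \<bar>\<theta> n\<bar> * ((\<theta> n)\<^sup>2 * (\<Sum>i<n. q n i * (1 - q n i)))) \<longlonglongrightarrow> 0 * v"
    by (rule tendsto_mult[OF tendsto_rabs_zero[OF \<theta>] variance])
  then show "(\<lambda>n. \<bar>\<theta> n\<bar> * ((\<theta> n)\<^sup>2 * (\<Sum>i<n. q n i * (1 - q n i))) / 6) \<longlonglongrightarrow> 0"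
    by (intro tendsto_divide_zero) simp
  show "eventually (\<lambda>n. norm ((\<Prod>i<n. centered_bernoulli_char (q n i) (\<theta> n)) -
      of_real (\<Prod>i<n. 1 - q n i * (1 - q n i) * (\<theta> n)\<^sup>2 / 2)) \<le>
      \<bar>\<theta> n\<bar> * ((\<theta> n)\<^sup>2 * (\<Sum>i<n. q n i * (1 - q n i))) / 6) sequentially"
    using eventually_abs_le_1[OF \<theta>]
  proof eventually_elim
    case (elim n)
    then show ?case
      using prod_centered_bernoulli_char_approx[of "{..<n}" "q n" "\<theta> n"] q
      by (simp add: power2_eq_square power3_eq_cube mult_ac del: of_real_diff)
  qed
qed

lemma prod_quadratic_array_tendsto_exp:
  "(\<lambda>n. \<Prod>i<n. 1 - q n i * (1 - q n i) * (\<theta> n)\<^sup>2 / 2) \<longlonglongrightarrow> exp (- v / 2)"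
proof -
  define V where "V n = (\<Sum>i<n. q n i * (1 - q n i))" for n
  define a where "a n i = q n i * (1 - q n i) * (\<theta> n)\<^sup>2 / 2" for n i
  have "(\<lambda>n. (\<theta> n)\<^sup>2 * ((\<theta> n)\<^sup>2 * V n)) \<longlonglongrightarrow> 0\<^sup>2 * v"
    unfolding V_def by (rule tendsto_mult[OF tendsto_power[OF \<theta>] variance])
  then have bound: "(\<lambda>n. (\<theta> n)\<^sup>2 * ((\<theta> n)\<^sup>2 * V n) / 16) \<longlonglongrightarrow> 0"
    by (intro tendsto_divide_zero) simp
  have "eventually (\<lambda>n. norm ((\<Prod>i<n. 1 - a n i) - exp (- (\<Sum>i<n. a n i))) \<le>
      (\<theta> n)\<^sup>2 * ((\<theta> n)\<^sup>2 * V n) / 16) sequentially"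
    using eventually_abs_le_1[OF \<theta>]
  proof eventually_elim
    case (elim n)
    have "(\<theta> n)\<^sup>2 \<le> 1"
      using elim abs_square_le_1 by blast
    have bounds: "0 \<le> a n i" "a n i \<le> (\<theta> n)\<^sup>2 / 8" if "i < n" for i
      using q[OF that] mult_right_mono[OF mult_one_minus_le_quarter[of "q n i"], of "(\<theta> n)\<^sup>2"]
      by (auto simp: a_def)
    have "norm ((\<Prod>i<n. 1 - a n i) - exp (- (\<Sum>i<n. a n i))) \<le> (\<Sum>i<n. (a n i)\<^sup>2)"
    proof (unfold real_norm_def, rule prod_one_minus_approx_exp)
      fix i assume "i \<in> {..<n}"
      then show "0 \<le> a n i \<and> a n i \<le> 1"
        using bounds[of i] \<open>(\<theta> n)\<^sup>2 \<le> 1\<close> by simp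
    qed
    also have "\<dots> \<le> (\<Sum>i<n. a n i * ((\<theta> n)\<^sup>2 / 8))"
    proof (rule sum_mono)
      fix i assume "i \<in> {..<n}"
      then show "(a n i)\<^sup>2 \<le> a n i * ((\<theta> n)\<^sup>2 / 8)"
        using mult_left_mono[OF bounds(2) bounds(1)] by (simp add: power2_eq_square)
    qed
    also have "\<dots> = (\<theta> n)\<^sup>2 * ((\<theta> n)\<^sup>2 * V n) / 16"
      unfolding V_def sum_distrib_left sum_divide_distrib by (intro sum.cong refl) (simp add: a_def)
    finally show ?case .
  qed
  then have "(\<lambda>n. (\<Prod>i<n. 1 - a n i) - exp (- (\<Sum>i<n. a n i))) \<longlonglongrightarrow> 0"
    using bound by (rule Lim_null_comparison)
  moreover have "(\<lambda>n. exp (- (\<Sum>i<n. a n i))) \<longlonglongrightarrow> exp (- v / 2)"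
  proof -
    have sum_a: "(\<Sum>i<n. a n i) = (\<theta> n)\<^sup>2 * V n / 2" for n
      unfolding V_def sum_distrib_left sum_divide_distrib by (intro sum.cong refl) (simp add: a_def)
    have "(\<lambda>n. exp (- ((\<theta> n)\<^sup>2 * V n / 2))) \<longlonglongrightarrow> exp (- (v / 2))"
      using variance unfolding V_def by (intro tendsto_intros) simp_all
    then show ?thesis
      unfolding sum_a by simp
  qed
  ultimately show ?thesis
    unfolding a_def by (rule Lim_transform[rotated])
qed

text \<open>The product is the characteristic function at theta n of a sum of independent
  Bernoulli variables with parameters q n i, and the exponential recentres the sum at c n.\<close>
lemma bernoulli_array_char_tendsto:
  assumes mean: "(\<lambda>n. \<theta> n * ((\<Sum>i<n. q n i) - c n)) \<longlonglongrightarrow> 0"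
  shows "(\<lambda>n. iexp (- \<theta> n * c n) * (\<Prod>i<n. of_real (q n i) * iexp (\<theta> n) + of_real (1 - q n i)))
    \<longlonglongrightarrow> of_real (exp (- v / 2))"
proof -
  define P where "P n = (\<Prod>i<n. centered_bernoulli_char (q n i) (\<theta> n))" for n
  have "P \<longlonglongrightarrow> of_real (exp (- v / 2))"
    using Lim_transform[OF tendsto_of_real[OF prod_quadratic_array_tendsto_exp]
        prod_centered_bernoulli_char_array_approx]
    unfolding P_def .
  moreover have "(\<lambda>n. iexp (\<theta> n * ((\<Sum>i<n. q n i) - c n))) \<longlonglongrightarrow> iexp 0"
    using mean by (intro isCont_tendsto_compose[OF isCont_iexp])
  ultimately have "(\<lambda>n. iexp (\<theta> n * ((\<Sum>i<n. q n i) - c n)) * P n) \<longlonglongrightarrow> iexp 0 * of_real (exp (- v / 2))"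
    by (rule tendsto_mult[rotated])
  moreover have "iexp (- \<theta> n * c n) * (\<Prod>i<n. of_real (q n i) * iexp (\<theta> n) + of_real (1 - q n i)) =
      iexp (\<theta> n * ((\<Sum>i<n. q n i) - c n)) * P n" for n
  proof -
    have "(\<Prod>i<n. of_real (q n i) * iexp (\<theta> n) + of_real (1 - q n i)) = (\<Prod>i<n. iexp (\<theta> n * q n i)) * P n"
      unfolding P_def bernoulli_char_eq_centered by (rule prod.distrib)
    also have "(\<Prod>i<n. iexp (\<theta> n * q n i)) = iexp (\<theta> n * (\<Sum>i<n. q n i))"
      by (simp add: exp_sum[symmetric] sum_distrib_left sum_distrib_right)
    finally show ?thesis
      by (simp add: exp_add[symmetric] algebra_simps)
  qed
  ultimately show ?thesis
    by simp
qed

end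

section \<open>The number of lucky cars\<close>

lemma finite_PF: "finite (PF n)"
proof (rule finite_subset)
  show "PF n \<subseteq> {xs. set xs \<subseteq> {..<Suc n} \<and> length xs = n}"
    by (auto simp: PF_iff_circ_park)
qed (simp add: finite_lists_length_eq)

lemma card_PF: "card (PF n) * Suc n = Suc n ^ n"
  using sum_power_lucky_PF[of n "1 :: nat"] by (simp add: mult.commute)

lemma PF_nonempty: "PF n \<noteq> {}"
  using card_PF[of n] by auto

text \<open>The lucky statistic is distributed as a sum of independent Bernoulli variables
  with these parameters.\<close>
definition lucky_param :: "nat \<Rightarrow> nat \<Rightarrow> real" where
  "lucky_param n i = real (Suc n - i) / real (Suc n)"

lemma lucky_param_bounds: "i < n \<Longrightarrow> 0 \<le> lucky_param n i \<and> lucky_param n i \<le> 1"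
  by (simp add: lucky_param_def)

lemma lucky_generating_function:
  fixes z :: "'a::real_field"
  shows "(\<Sum>p\<in>PF n. z ^ lucky p) / of_nat (card (PF n)) =
    (\<Prod>i<n. of_real (lucky_param n i) * z + of_real (1 - lucky_param n i))"
proof -
  have "of_real (lucky_param n i) * z + of_real (1 - lucky_param n i) =
      (of_nat (Suc n - i) * z + of_nat i) / of_nat (Suc n)" if "i < n" for i
  proof -
    have "1 - lucky_param n i = real i / real (Suc n)"
      using that by (simp add: lucky_param_def of_nat_diff field_simps del: of_nat_Suc)
    then show ?thesis
      by (simp add: lucky_param_def add_divide_distrib del: of_nat_Suc)
  qed
  then have "(\<Prod>i<n. of_real (lucky_param n i) * z + of_real (1 - lucky_param n i)) =
      (\<Prod>i<n. of_nat (Suc n - i) * z + of_nat i) / of_nat (Suc n) ^ n"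
    by (simp add: prod_dividef)
  also have "\<dots> = of_nat (Suc n) * (\<Sum>p\<in>PF n. z ^ lucky p) / (of_nat (card (PF n)) * of_nat (Suc n))"
    by (simp only: sum_power_lucky_PF of_nat_power[symmetric] card_PF[symmetric] of_nat_mult)
  finally show ?thesis
    by (simp del: of_nat_Suc)
qed

lemma char_distr_pmf_of_set:
  assumes "finite A" "A \<noteq> {}"
  shows "char (distr (measure_pmf (pmf_of_set A)) borel f) t = (\<Sum>a\<in>A. iexp (t * f a)) / of_nat (card A)"
proof -
  have "char (distr (measure_pmf (pmf_of_set A)) borel f) t =
      measure_pmf.expectation (pmf_of_set A) (\<lambda>a. iexp (t * f a))"
    unfolding char_def by (subst integral_distr) auto
  also have "\<dots> = (\<Sum>a\<in>A. pmf (pmf_of_set A) a *\<^sub>R iexp (t * f a))"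
    by (rule integral_measure_pmf) (use assms in auto)
  also have "\<dots> = (\<Sum>a\<in>A. iexp (t * f a) / of_nat (card A))"
    using assms by (intro sum.cong refl) (simp add: scaleR_conv_of_real field_simps)
  finally show ?thesis
    by (simp add: sum_divide_distrib)
qed

lemma cdf_distr_pmf_of_set:
  assumes "finite A" "A \<noteq> {}"
  shows "cdf (distr (measure_pmf (pmf_of_set A)) borel f) x = real (card {a \<in> A. f a \<le> x}) / real (card A)"
proof -
  have "cdf (distr (measure_pmf (pmf_of_set A)) borel f) x = measure (measure_pmf (pmf_of_set A)) (f -` {..x})"
    unfolding cdf_def by (subst measure_distr) auto
  also have "\<dots> = real (card (A \<inter> f -` {..x})) / real (card A)"
    by (rule measure_pmf_of_set[OF assms(2,1)])
  also have "A \<inter> f -` {..x} = {a \<in> A. f a \<le> x}"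
    by auto
  finally show ?thesis .
qed

definition lucky_distribution :: "nat \<Rightarrow> real measure" where
  "lucky_distribution n =
    distr (measure_pmf (pmf_of_set (PF n))) borel (\<lambda>p. (real (lucky p) - real n / 2) / sqrt (real n / 6))"

lemma real_distribution_lucky_distribution: "real_distribution (lucky_distribution n)"
  unfolding lucky_distribution_def
  by (intro prob_space.real_distribution_distr prob_space_measure_pmf) simp

lemma char_lucky_distribution:
  fixes t :: real and n :: nat
  defines "\<theta> \<equiv> t / sqrt (real n / 6)"
  shows "char (lucky_distribution n) t = iexp (- \<theta> * (real n / 2)) *
    (\<Prod>i<n. of_real (lucky_param n i) * iexp \<theta> + of_real (1 - lucky_param n i))"
proof -
  have "iexp (t * ((real (lucky p) - real n / 2) / sqrt (real n / 6))) =
      iexp (- \<theta> * (real n / 2)) * iexp \<theta> ^ lucky p" for p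
  proof -
    have "t * ((real (lucky p) - real n / 2) / sqrt (real n / 6)) = - \<theta> * (real n / 2) + real (lucky p) * \<theta>"
      by (simp add: \<theta>_def diff_divide_distrib algebra_simps)
    then have "iexp (t * ((real (lucky p) - real n / 2) / sqrt (real n / 6))) =
        iexp (- \<theta> * (real n / 2) + real (lucky p) * \<theta>)"
      by (subst \<open>t * _ = _\<close>) (rule refl)
    also have "\<dots> = iexp (- \<theta> * (real n / 2)) * exp (of_nat (lucky p) * (\<i> * of_real \<theta>))"
      by (simp add: exp_add[symmetric] algebra_simps)
    finally show ?thesis
      by (simp only: exp_of_nat_mult)
  qed
  then show ?thesis
    unfolding lucky_distribution_def char_distr_pmf_of_set[OF finite_PF PF_nonempty]
      lucky_generating_function[symmetric]
    by (simp add: sum_distrib_left)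
qed

lemma sum_lessThan_real: "(\<Sum>i<n. real i) = real n * (real n - 1) / 2"
  by (induction n) (simp_all add: field_simps)

lemma sum_lessThan_real_squares: "(\<Sum>i<n. (real i)\<^sup>2) = real n * (real n - 1) * (2 * real n - 1) / 6"
  by (induction n) (simp_all add: field_simps power2_eq_square)

lemma sum_lucky_param: "(\<Sum>i<n. lucky_param n i) = real n / 2 + real n / real (Suc n)"
proof -
  have "(\<Sum>i<n. lucky_param n i) = (\<Sum>i<n. 1 - real i / real (Suc n))"
    by (intro sum.cong refl) (simp add: lucky_param_def of_nat_diff field_simps del: of_nat_Suc)
  also have "\<dots> = real n - real n * (real n - 1) / 2 / real (Suc n)"
    by (simp add: sum_subtractf sum_divide_distrib[symmetric] sum_lessThan_real del: of_nat_Suc)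
  also have "\<dots> = real n / 2 + real n / real (Suc n)"
    by (simp add: field_simps)
  finally show ?thesis .
qed

lemma sum_lucky_param_variance:
  "(\<Sum>i<n. lucky_param n i * (1 - lucky_param n i)) =
    real n * (real n - 1) * (real n + 4) / (6 * (real n + 1)\<^sup>2)"
proof -
  have "(\<Sum>i<n. lucky_param n i * (1 - lucky_param n i)) =
      (\<Sum>i<n. real i / real (Suc n) - (real i)\<^sup>2 / (real (Suc n))\<^sup>2)"
    by (intro sum.cong refl) (simp add: lucky_param_def of_nat_diff field_simps power2_eq_square del: of_nat_Suc)
  also have "\<dots> = real n * (real n - 1) / 2 / (real n + 1) -
      real n * (real n - 1) * (2 * real n - 1) / 6 / (real n + 1)\<^sup>2"
    by (simp add: sum_subtractf sum_divide_distrib[symmetric] sum_lessThan_real sum_lessThan_real_squares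
      add.commute)
  also have "\<dots> = real n * (real n - 1) * (real n + 4) / (6 * (real n + 1)\<^sup>2)"
  proof -
    define d where "d = real n + 1"
    have "d \<noteq> 0"
      unfolding d_def by linarith
    then show ?thesis
      unfolding d_def[symmetric] by (simp add: field_simps power2_eq_square) (simp add: d_def algebra_simps)
  qed
  finally show ?thesis .
qed

lemma weak_conv_lucky_distribution: "weak_conv_m lucky_distribution std_normal_distribution"
proof (rule levy_continuity[OF real_distribution_lucky_distribution real_dist_normal_dist])
  fix t :: real
  have scale: "(\<lambda>n. 1 / sqrt (real n / 6)) \<longlonglongrightarrow> 0"
    by real_asymp
  have "(\<lambda>n::nat. (t / sqrt (real n / 6))\<^sup>2 * (\<Sum>i<n. lucky_param n i * (1 - lucky_param n i))) \<longlonglongrightarrow> t\<^sup>2"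
  proof (rule Lim_transform_eventually)
    have ratio: "(\<lambda>n. (real n - 1) * (real n + 4) / (real n + 1)\<^sup>2) \<longlonglongrightarrow> 1"
      by real_asymp
    show "(\<lambda>n. t\<^sup>2 * ((real n - 1) * (real n + 4) / (real n + 1)\<^sup>2)) \<longlonglongrightarrow> t\<^sup>2"
      using tendsto_mult_left[OF ratio, of "t\<^sup>2"] by simp
    show "eventually (\<lambda>n. t\<^sup>2 * ((real n - 1) * (real n + 4) / (real n + 1)\<^sup>2) =
        (t / sqrt (real n / 6))\<^sup>2 * (\<Sum>i<n. lucky_param n i * (1 - lucky_param n i))) sequentially"
      using eventually_gt_at_top[of 0]
      by eventually_elim (simp only: sum_lucky_param_variance, simp add: power_divide field_simps)
  qed
  moreover have "(\<lambda>n. t / sqrt (real n / 6) * ((\<Sum>i<n. lucky_param n i) - real n / 2)) \<longlonglongrightarrow> 0"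
  proof -
    have "(\<lambda>n. 1 / sqrt (real n / 6) * (real n / real (Suc n))) \<longlonglongrightarrow> 0"
      by real_asymp
    from tendsto_mult_right_zero[OF this, of t] show ?thesis
      by (simp add: sum_lucky_param)
  qed
  ultimately show "(\<lambda>n. char (lucky_distribution n) t) \<longlonglongrightarrow> char std_normal_distribution t"
    unfolding char_lucky_distribution char_std_normal_distribution
    using tendsto_mult_right_zero[OF scale, of t] lucky_param_bounds
    by (intro bernoulli_array_char_tendsto) simp_all
qed

lemma cdf_lucky_distribution:
  "cdf (lucky_distribution n) x =
    real (card {p \<in> PF n. (real (lucky p) - real n / 2) / sqrt (real n / 6) \<le> x}) / real (card (PF n))"
  unfolding lucky_distribution_def by (rule cdf_distr_pmf_of_set[OF finite_PF PF_nonempty])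

lemma null_sets_std_normal_distribution_singleton: "{x} \<in> null_sets std_normal_distribution"
proof -
  have "AE t in lborel. t \<in> {x} \<longrightarrow> std_normal_density t = 0"
    using AE_lborel_singleton[of x] by eventually_elim auto
  then show ?thesis
    by (subst null_sets_density_iff) auto
qed

lemma cdf_std_normal_distribution:
  "cdf std_normal_distribution x = (LBINT t=-\<infinity>..ereal x. exp (- t\<^sup>2 / 2) / sqrt (2 * pi))"
proof -
  interpret real_distribution std_normal_distribution
    by (rule real_dist_normal_dist)
  have "cdf std_normal_distribution x = measure std_normal_distribution ({..<x} \<union> {x})"
    unfolding cdf_def by (intro arg_cong[where f="measure std_normal_distribution"]) auto
  also have "\<dots> = measure std_normal_distribution {..<x}"
    by (rule measure_Un_null_set) (auto simp: null_sets_std_normal_distribution_singleton)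
  also have "\<dots> = integral\<^sup>L std_normal_distribution (indicator {..<x})"
    by simp
  also have "\<dots> = (LINT t|lborel. std_normal_density t *\<^sub>R indicator {..<x} t)"
    by (rule integral_density) auto
  also have "\<dots> = (LBINT t=-\<infinity>..ereal x. exp (- t\<^sup>2 / 2) / sqrt (2 * pi))"
  proof -
    have "einterval (-\<infinity>) (ereal x) = {..<x}"
      by (auto simp: einterval_def)
    then show ?thesis
      unfolding interval_lebesgue_integral_def set_lebesgue_integral_def
      by (auto intro!: Bochner_Integration.integral_cong simp: std_normal_density_def split: split_indicator)
  qed
  finally show ?thesis .
qed

theorem mainTheorem11:
  fixes x :: real
  shows "(\<lambda>n. real (card {p \<in> PF n. (real (lucky p) - real n / 2) / sqrt (real n / 6) \<le> x})
              / real (card (PF n)))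
         \<longlonglongrightarrow> (LBINT t=-\<infinity>..ereal x. exp (- t\<^sup>2 / 2) / sqrt (2 * pi))"
proof -
  interpret real_distribution std_normal_distribution
    by (rule real_dist_normal_dist)
  have "isCont (cdf std_normal_distribution) x"
    using null_sets_std_normal_distribution_singleton[of x] by (simp add: isCont_cdf measure_def null_setsD1)
  then have "(\<lambda>n. cdf (lucky_distribution n) x) \<longlonglongrightarrow> cdf std_normal_distribution x"
    using weak_conv_lucky_distribution by (simp add: weak_conv_m_def weak_conv_def)
  then show ?thesis
    unfolding cdf_lucky_distribution cdf_std_normal_distribution .
qed

end
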